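(* Let $n,p,r\ge 1$, let $A_0,A_1\in\mathbb{R}^{n\times n}$, $B\in\mathbb{R}^{n\times r}$, $C\in\mathbb{R}^{p\times n}$, and consider the second order continuous-time linear system $$x''(t)=A_0x(t)+A_1x'(t)+Bu(t),\qquad x(0)=x_0,\ x'(0)=x_1,\qquad y(t)=Cx(t),$$ with state $x(t)\in\mathbb{R}^n$, input $u(t)\in\mathbb{R}^r$, output $y(t)\in\mathbb{R}^p$ and unknown initial vectors $x_0,x_1\in\mathbb{R}^n$, where $x(\cdot)$ is continuously differentiable of order $2n-1$ and $u(\cdot)$ is continuously differentiable of order $2n-3$. Define matrices $S_k,P_k\in\mathbb{R}^{n\times n}$ by $S_0=A_0$, $P_0=A_1$ and, for $k\ge1$, $S_k=P_{k-1}A_0$, $P_k=S_{k-1}+P_{k-1}A_1$. Let $\mathcal{O}(A_0,A_1,C)$ be the $(2np)\times(2n)$ block matrix whose block rows are, in order, $$\begin{bmatrix} C & 0_{p\times n}\end{bmatrix},\ \begin{bmatrix} 0_{p\times n} & C\end{bmatrix},\ \begin{bmatrix} CS_0 & CP_0\end{bmatrix},\ \dots,\ \begin{bmatrix} CS_{2n-3} & CP_{2n-3}\end{bmatrix}.$$ Then the system is observable if and only if $\mathcal{O}(A_0,A_1,C)$ has full rank, i.e. $\operatorname{rank}\mathcal{O}(A_0,A_1,C)=2n$.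
   Context: The system is called observable (on an interval $[0,t_1]$, $t_1>0$) if any initial state $(x_0,x_1)$ at $t=0$ can be uniquely determined from the knowledge of the output $y(t)$ and the input $u(t)$ over $[0,t_1]$. Here $0_{p\times n}$ denotes the $p\times n$ zero matrix. *)

theory Defs
  imports "HOL-Analysis.Analysis" "HOL-Library.Countable_Set"
begin

definition Ck_on :: "nat \<Rightarrow> real set \<Rightarrow> (real \<Rightarrow> 'a::real_normed_vector) \<Rightarrow> bool" where
  "Ck_on m S f \<longleftrightarrow> (\<exists>D :: nat \<Rightarrow> real \<Rightarrow> 'a. D 0 = f \<and>
      (\<forall>k<m. \<forall>t\<in>S. (D k has_vector_derivative D (Suc k) t) (at t within S)) \<and>
      (\<forall>k\<le>m. continuous_on S (D k)))"

text \<open>Solutions (x,u) of  x'' = A0 x + A1 x' + B u  on [0,t1] with the regularity of the paper: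
  x of class C^(2n-1) (at least C^2, so that x'' exists), u of class C^(2n-3)
  (natural-number subtraction, i.e. merely continuous when n = 1).\<close>
definition is_solution ::
  "real^'n^'n \<Rightarrow> real^'n^'n \<Rightarrow> real^'r^'n \<Rightarrow> real \<Rightarrow> (real \<Rightarrow> real^'r) \<Rightarrow> (real \<Rightarrow> real^'n) \<Rightarrow> bool" where
  "is_solution A0 A1 B t1 u x \<longleftrightarrow>
     Ck_on (max 2 (2 * CARD('n) - 1)) {0..t1} x \<and>
     Ck_on (2 * CARD('n) - 3) {0..t1} u \<and>
     (\<forall>t\<in>{0..t1}.
        vector_derivative (\<lambda>s. vector_derivative x (at s within {0..t1})) (at t within {0..t1})
        = A0 *v x t + A1 *v vector_derivative x (at t within {0..t1}) + B *v u t)"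

definition observable_on ::
  "real^'n^'n \<Rightarrow> real^'n^'n \<Rightarrow> real^'r^'n \<Rightarrow> real^'n^'p \<Rightarrow> real \<Rightarrow> bool" where
  "observable_on A0 A1 B C t1 \<longleftrightarrow>
     (\<forall>u x z. is_solution A0 A1 B t1 u x \<and> is_solution A0 A1 B t1 u z \<and>
        (\<forall>t\<in>{0..t1}. C *v x t = C *v z t) \<longrightarrow>
        x 0 = z 0 \<and> vector_derivative x (at 0 within {0..t1}) = vector_derivative z (at 0 within {0..t1}))"

primrec SP :: "real^'n^'n \<Rightarrow> real^'n^'n \<Rightarrow> nat \<Rightarrow> (real^'n^'n) \<times> (real^'n^'n)" where
  "SP A0 A1 0 = (A0, A1)"
| "SP A0 A1 (Suc k) = (snd (SP A0 A1 k) ** A0, fst (SP A0 A1 k) + snd (SP A0 A1 k) ** A1)"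

definition S_mat :: "real^'n^'n \<Rightarrow> real^'n^'n \<Rightarrow> nat \<Rightarrow> real^'n^'n" where
  "S_mat A0 A1 k = fst (SP A0 A1 k)"

definition P_mat :: "real^'n^'n \<Rightarrow> real^'n^'n \<Rightarrow> nat \<Rightarrow> real^'n^'n" where
  "P_mat A0 A1 k = snd (SP A0 A1 k)"

definition hcat :: "real^'n^'p \<Rightarrow> real^'n^'p \<Rightarrow> real^('n + 'n)^'p" where
  "hcat M N = (\<chi> i. \<chi> c. case c of Inl j \<Rightarrow> M $ i $ j | Inr j \<Rightarrow> N $ i $ j)"

definition obs_block :: "real^'n^'n \<Rightarrow> real^'n^'n \<Rightarrow> real^'n^'p \<Rightarrow> nat \<Rightarrow> real^('n + 'n)^'p" where
  "obs_block A0 A1 C j =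
     (if j = 0 then hcat C 0
      else if j = 1 then hcat 0 C
      else hcat (C ** S_mat A0 A1 (j - 2)) (C ** P_mat A0 A1 (j - 2)))"

text \<open>Rows are indexed by pairs (b, i) where
  b ranges over a 2n-element type, enumerated as block number to_nat_on UNIV b in {0..<2n},
  and i is the row inside the block.\<close>
definition obs_matrix :: "real^'n^'n \<Rightarrow> real^'n^'n \<Rightarrow> real^'n^'p \<Rightarrow> real^('n + 'n)^(('n + 'n) \<times> 'p)" where
  "obs_matrix A0 A1 C = (\<chi> r. obs_block A0 A1 C (to_nat_on (UNIV :: ('n + 'n) set) (fst r)) $ snd r)"

end

theory Submission
  imports Defs
begin

text \<open>
  The second order system is the first order system \<open>w' = L w\<close> for the companion map
  \<open>L (x, x') = (x', A0 x + A1 x')\<close> on \<open>\<real>\<^sup>n \<times> \<real>\<^sup>n\<close>, and block row \<open>j\<close> of the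
  observability matrix is \<open>C\<close> applied to the first component of \<open>L\<^sup>j\<close>. So full rank means
  that \<open>C (fst (L\<^sup>j w)) = 0\<close> for all \<open>j < 2n\<close> forces \<open>w = 0\<close>.

  If the rank is full, the difference \<open>d\<close> of two solutions with the same input solves the
  homogeneous equation; differentiating \<open>C d = 0\<close> up to order \<open>2n - 1\<close> shows that
  \<open>w = (d 0, d' 0)\<close> is such a vector, hence zero.
  Conversely, the subspaces \<open>{w. \<forall>k<m. C (fst (L\<^sup>k w)) = 0}\<close> decrease with \<open>m\<close> and are
  stationary after at most \<open>2n\<close> steps, so a nonzero \<open>w\<close> with \<open>C (fst (L\<^sup>j w)) = 0\<close>
  for \<open>j < 2n\<close> satisfies this for all \<open>j\<close>. Then \<open>t \<mapsto> fst (exp (t L) w)\<close> is a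
  solution with zero input and zero output that the output cannot distinguish from the zero
  solution.
\<close>

definition exp_lin :: "('a::real_normed_vector \<Rightarrow> 'a) \<Rightarrow> real \<Rightarrow> 'a \<Rightarrow> 'a" where
  "exp_lin L t v = (\<Sum>n. (t^n / fact n) *\<^sub>R (L^^n) v)"

lemma linear_funpow:
  fixes L :: "'a::real_vector \<Rightarrow> 'a"
  assumes "linear L"
  shows "linear (L^^n)"
proof (induction n)
  case (Suc n)
  then show ?case using linear_compose[OF Suc assms] by (simp add: o_def)
qed (auto simp: linear_iff)

lemma norm_funpow_le:
  fixes L :: "'a::euclidean_space \<Rightarrow> 'a"
  assumes "linear L"
  obtains K where "K \<ge> 0" "\<And>n v. norm ((L^^n) v) \<le> K^n * norm v"
proof -
  obtain K where K: "K > 0" "\<And>v. norm (L v) \<le> K * norm v"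
    using linear_bounded_pos[OF assms] by blast
  have "norm ((L^^n) v) \<le> K^n * norm v" for n v
  proof (induction n)
    case (Suc n)
    have "norm ((L^^Suc n) v) \<le> K * norm ((L^^n) v)" using K(2) by simp
    also have "\<dots> \<le> K * (K^n * norm v)" using Suc K(1) by simp
    finally show ?case by (simp add: mult.assoc)
  qed simp
  then show thesis using that[OF less_imp_le[OF K(1)]] by blast
qed

lemma summable_exp_lin:
  fixes L :: "'a::euclidean_space \<Rightarrow> 'a"
  assumes "linear L"
  shows "summable (\<lambda>n. (t^n / fact n) *\<^sub>R (L^^n) v)"
proof -
  obtain K where K: "K \<ge> 0" "\<And>n v. norm ((L^^n) v) \<le> K^n * norm v"
    using norm_funpow_le[OF assms] by blast
  have bound: "norm ((t^n / fact n) *\<^sub>R (L^^n) v) \<le> norm v * ((K * \<bar>t\<bar>)^n / fact n)" for n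
  proof -
    have "norm ((t^n / fact n) *\<^sub>R (L^^n) v) = (\<bar>t\<bar>^n / fact n) * norm ((L^^n) v)"
      by (simp add: power_abs)
    also have "\<dots> \<le> (\<bar>t\<bar>^n / fact n) * (K^n * norm v)"
      using K(2) by (intro mult_left_mono) auto
    finally show ?thesis by (simp add: field_simps)
  qed
  have "summable (\<lambda>n. norm v * ((K * \<bar>t\<bar>)^n / fact n))"
    using summable_exp_generic[of "K * \<bar>t\<bar>"]
    by (intro summable_mult) (simp add: divide_inverse mult.commute)
  then show ?thesis using bound by (rule summable_comparison_test')
qed

lemma bounded_linear_exp_lin:
  fixes L :: "'a::euclidean_space \<Rightarrow> 'a" and h :: "'a \<Rightarrow> 'b::real_normed_vector"
  assumes "linear L" "bounded_linear h"
  shows "h (exp_lin L t v) = (\<Sum>n. (t^n / fact n) *\<^sub>R h ((L^^n) v))"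
  using bounded_linear.suminf[OF assms(2) summable_exp_lin[OF assms(1)]]
  by (simp add: exp_lin_def linear_scale[OF bounded_linear.linear[OF assms(2)]])

lemma exp_lin_in_kernel:
  fixes L :: "'a::euclidean_space \<Rightarrow> 'a" and h :: "'a \<Rightarrow> 'b::real_normed_vector"
  assumes "linear L" "bounded_linear h" "\<And>n. h ((L^^n) v) = 0"
  shows "h (exp_lin L t v) = 0"
  using bounded_linear_exp_lin[OF assms(1,2)] assms(3) by simp

lemma exp_lin_at_0 [simp]: "exp_lin L 0 v = v"
proof -
  have "(\<lambda>n. ((0::real)^n / fact n) *\<^sub>R (L^^n) v) = (\<lambda>n. if n = 0 then v else 0)"
    by auto
  then show ?thesis
    using sums_single[of 0 "\<lambda>_. v"] by (simp add: exp_lin_def sums_iff)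
qed

lemma exp_lin_commute:
  fixes L :: "'a::euclidean_space \<Rightarrow> 'a"
  assumes "linear L"
  shows "L (exp_lin L t v) = exp_lin L t (L v)"
  using bounded_linear_exp_lin[OF assms linear_conv_bounded_linear[THEN iffD1, OF assms]]
  by (simp add: exp_lin_def funpow_swap1)

lemma has_vector_derivative_exp_lin:
  fixes L :: "'a::euclidean_space \<Rightarrow> 'a"
  assumes "linear L"
  shows "((\<lambda>t. exp_lin L t v) has_vector_derivative exp_lin L t (L v)) (at t)"
proof -
  have "((\<lambda>s. exp_lin L s v \<bullet> i) has_field_derivative exp_lin L t (L v) \<bullet> i) (at t)" for i
  proof -
    define c where "c n = ((L^^n) v \<bullet> i) / fact n" for n
    have coord: "exp_lin L s w \<bullet> i = (\<Sum>n. (s^n / fact n) * ((L^^n) w \<bullet> i))" for s w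
      using bounded_linear_exp_lin[OF assms bounded_linear_inner_left] by simp
    have "summable (\<lambda>n. c n * s^n)" for s
      using bounded_linear.summable[OF bounded_linear_inner_left[of i] summable_exp_lin[OF assms, of s v]]
      by (simp add: c_def field_simps)
    then have "((\<lambda>s. \<Sum>n. c n * s^n) has_field_derivative (\<Sum>n. diffs c n * t^n)) (at t)"
      by (rule termdiffs_strong_converges_everywhere)
    moreover have "diffs c n = (L^^n) (L v) \<bullet> i / fact n" for n
      by (simp add: diffs_def c_def funpow_Suc_right del: funpow.simps)
    moreover have "(\<lambda>s. exp_lin L s v \<bullet> i) = (\<lambda>s. \<Sum>n. c n * s^n)"
      unfolding coord c_def by (intro ext suminf_cong) simp
    moreover have "exp_lin L t (L v) \<bullet> i = (\<Sum>n. diffs c n * t^n)"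
      unfolding coord by (intro suminf_cong) (simp add: \<open>diffs c _ = _\<close>)
    ultimately show ?thesis
      by simp
  qed
  then have "((\<lambda>s. exp_lin L s v \<bullet> i) has_derivative (\<lambda>h. h *\<^sub>R exp_lin L t (L v) \<bullet> i)) (at t)" for i
    by (simp add: has_field_derivative_def mult.commute[of _ "_ \<bullet> i"])
  then show ?thesis
    unfolding has_vector_derivative_def
    by (subst has_derivative_componentwise_within[where S = UNIV, simplified]) simp
qed

lemma subspace_chain_stabilizes:
  fixes K :: "nat \<Rightarrow> 'a::euclidean_space set"
  assumes sub: "\<And>m. subspace (K m)" and dec: "\<And>m. K (Suc m) \<subseteq> K m"
  obtains i where "i \<le> DIM('a)" "K (Suc i) = K i"
proof -
  have "\<exists>i\<le>DIM('a). K (Suc i) = K i"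
  proof (rule ccontr)
    assume "\<not> ?thesis"
    then have strict: "K (Suc i) \<subset> K i" if "i \<le> DIM('a)" for i
      using that dec[of i] by auto
    have span_K: "span (K n) = K n" for n
      using sub span_eq_iff by blast
    have "dim (K m) + m \<le> DIM('a)" if "m \<le> Suc DIM('a)" for m
      using that
    proof (induction m)
      case 0
      then show ?case by (simp add: dim_subset_UNIV)
    next
      case (Suc m)
      then have "dim (K (Suc m)) < dim (K m)"
        using dim_psubset[of "K (Suc m)" "K m"] strict[of m] by (simp add: span_K)
      then show ?case using Suc by simp
    qed
    from this[of "Suc DIM('a)"] show False by simp
  qed
  then show thesis using that by blast
qed

lemma vanishes_on_orbit_if_first_DIM:
  fixes L :: "'a::euclidean_space \<Rightarrow> 'a" and h :: "'a \<Rightarrow> 'b::real_vector"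
  assumes "linear L" "linear h" and first: "\<forall>j<DIM('a). h ((L^^j) v) = 0"
  shows "h ((L^^j) v) = 0"
proof -
  define K where "K m = {y. \<forall>k<m. h ((L^^k) y) = 0}" for m
  have "subspace (K m)" for m
  proof -
    have lin: "linear (\<lambda>y. h ((L^^k) y))" for k
      using linear_compose[OF linear_funpow[OF assms(1)] assms(2)] by (simp add: o_def)
    show ?thesis
      unfolding subspace_def K_def
      by (auto simp: linear_add[OF lin] linear_scale[OF lin] linear_0[OF lin])
  qed
  moreover have antitone: "K m' \<subseteq> K m" if "m \<le> m'" for m m'
    using that by (auto simp: K_def)
  ultimately obtain i where i: "i \<le> DIM('a)" "K (Suc i) = K i"
    using subspace_chain_stabilizes[of K] le_SucI by blast
  have K_Suc: "K (Suc m) = {y. h y = 0 \<and> L y \<in> K m}" for m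
    by (auto simp: K_def less_Suc_eq_0_disj funpow_Suc_right simp del: funpow.simps)
  \<comment> \<open>so once the chain is stationary for one step, it stays stationary\<close>
  have "K (i + d) = K i" for d
  proof (induction d)
    case (Suc d)
    then show ?case
      using i(2) K_Suc[of "i + d"] K_Suc[of i] by simp
  qed simp
  moreover have "v \<in> K i"
    using first antitone[OF i(1)] by (auto simp: K_def)
  ultimately have "v \<in> K (i + Suc j)" by blast
  then show ?thesis by (simp add: K_def)
qed

definition derivative_chain :: "nat \<Rightarrow> real set \<Rightarrow> (nat \<Rightarrow> real \<Rightarrow> 'a::real_normed_vector) \<Rightarrow> bool" where
  "derivative_chain m S D \<longleftrightarrow> (\<forall>k<m. \<forall>t\<in>S. (D k has_vector_derivative D (Suc k) t) (at t within S))"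

lemma has_vector_derivative_unique_Icc:
  fixes f :: "real \<Rightarrow> 'a::euclidean_space"
  assumes "a < b" "t \<in> {a..b}"
    and "(f has_vector_derivative f') (at t within {a..b})"
    and "(f has_vector_derivative f'') (at t within {a..b})"
  shows "f' = f''"
  using vector_derivative_within_closed_interval[OF assms(1,2)] assms(3,4) by metis

lemma vector_derivatives_of_chain:
  fixes D :: "nat \<Rightarrow> real \<Rightarrow> 'a::euclidean_space"
  assumes "a < b" "t \<in> {a..b}" "derivative_chain m {a..b} D" "2 \<le> m"
  shows "vector_derivative (D 0) (at t within {a..b}) = D 1 t"
    and "vector_derivative (\<lambda>s. vector_derivative (D 0) (at s within {a..b})) (at t within {a..b}) = D 2 t"
proof -
  have first: "vector_derivative (D 0) (at s within {a..b}) = D 1 s" if "s \<in> {a..b}" for s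
    using assms that by (auto simp: derivative_chain_def intro: vector_derivative_within_closed_interval)
  then show "vector_derivative (D 0) (at t within {a..b}) = D 1 t"
    using assms(2) .
  have "(D 1 has_vector_derivative D 2 t) (at t within {a..b})"
    using assms by (auto simp: derivative_chain_def numeral_2_eq_2)
  then have "((\<lambda>s. vector_derivative (D 0) (at s within {a..b})) has_vector_derivative D 2 t) (at t within {a..b})"
    by (rule has_vector_derivative_transform_within[where d = 1]) (use assms(2) first in auto)
  then show "vector_derivative (\<lambda>s. vector_derivative (D 0) (at s within {a..b})) (at t within {a..b}) = D 2 t"
    by (rule vector_derivative_within_closed_interval[OF assms(1,2)])
qed

lemma chain_output_vanishes:
  fixes D :: "nat \<Rightarrow> real \<Rightarrow> 'a::euclidean_space" and h :: "'a \<Rightarrow> 'b::euclidean_space"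
  assumes "a < b" "derivative_chain m {a..b} D" "bounded_linear h"
    and "\<forall>t\<in>{a..b}. h (D 0 t) = 0" "k \<le> m" "t \<in> {a..b}"
  shows "h (D k t) = 0"
  using assms(5,6)
proof (induction k arbitrary: t)
  case 0
  then show ?case using assms(4) by blast
next
  case (Suc k)
  have "((\<lambda>s. h (D k s)) has_vector_derivative h (D (Suc k) t)) (at t within {a..b})"
    using assms(2) Suc.prems
    by (intro bounded_linear.has_vector_derivative[OF assms(3)]) (auto simp: derivative_chain_def)
  moreover have "((\<lambda>s. h (D k s)) has_vector_derivative 0) (at t within {a..b})"
    by (rule has_vector_derivative_transform_within[OF has_vector_derivative_const zero_less_one])
      (use Suc in auto)
  ultimately show ?case
    using has_vector_derivative_unique_Icc[OF assms(1) Suc.prems(2)] by blast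
qed

definition companion :: "real^'n^'n \<Rightarrow> real^'n^'n \<Rightarrow> (real^'n) \<times> (real^'n) \<Rightarrow> (real^'n) \<times> (real^'n)" where
  "companion A0 A1 v = (snd v, A0 *v fst v + A1 *v snd v)"

lemma linear_companion: "linear (companion A0 A1)"
  by (rule linearI) (auto simp: companion_def matrix_vector_right_distrib matrix_vector_mult_scaleR algebra_simps)

lemma fst_companion [simp]: "fst (companion A0 A1 v) = snd v"
  and snd_companion [simp]: "snd (companion A0 A1 v) = A0 *v fst v + A1 *v snd v"
  by (simp_all add: companion_def)

lemma companion_pow_chain:
  fixes D :: "nat \<Rightarrow> real \<Rightarrow> real^'n"
  assumes "a < b" "derivative_chain m {a..b} D"
    and ode: "\<forall>s\<in>{a..b}. D 2 s = A0 *v D 0 s + A1 *v D 1 s" and "k < m" "t \<in> {a..b}"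
  shows "(companion A0 A1 ^^ k) (D 0 t, D 1 t) = (D k t, D (Suc k) t)"
proof -
  have rec: "D (Suc (Suc k)) s = A0 *v D k s + A1 *v D (Suc k) s"
    if "Suc (Suc k) \<le> m" "s \<in> {a..b}" for k s
    using that
  proof (induction k arbitrary: s)
    case 0
    then show ?case using ode by (simp add: numeral_2_eq_2)
  next
    case (Suc k)
    have "(D (Suc (Suc k)) has_vector_derivative D (Suc (Suc (Suc k))) s) (at s within {a..b})"
      using assms(2) Suc.prems by (simp add: derivative_chain_def)
    moreover have "(D (Suc (Suc k)) has_vector_derivative A0 *v D (Suc k) s + A1 *v D (Suc (Suc k)) s)
        (at s within {a..b})"
    proof (rule has_vector_derivative_transform_within[where d = 1])
      show "((\<lambda>s. A0 *v D k s + A1 *v D (Suc k) s) has_vector_derivative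
          A0 *v D (Suc k) s + A1 *v D (Suc (Suc k)) s) (at s within {a..b})"
        using assms(2) Suc.prems
        by (intro has_vector_derivative_add bounded_linear.has_vector_derivative[OF matrix_vector_mul_bounded_linear])
          (auto simp: derivative_chain_def)
    qed (use Suc in auto)
    ultimately show ?case
      using has_vector_derivative_unique_Icc[OF assms(1) Suc.prems(2)] by blast
  qed
  show ?thesis
    using assms(4)
  proof (induction k)
    case (Suc k)
    then show ?case using rec[of k t] assms(5) by (simp add: companion_def)
  qed simp
qed

lemma is_solution_derivative_chain:
  fixes A0 A1 :: "real^'n^'n" and B :: "real^'r^'n"
  assumes "t1 > 0" "is_solution A0 A1 B t1 u x"
  obtains D where "D 0 = x" "derivative_chain (max 2 (2 * CARD('n) - 1)) {0..t1} D"
    "\<forall>t\<in>{0..t1}. D 2 t = A0 *v D 0 t + A1 *v D 1 t + B *v u t"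
    "vector_derivative x (at 0 within {0..t1}) = D 1 0"
proof -
  obtain D where D: "D 0 = x" "derivative_chain (max 2 (2 * CARD('n) - 1)) {0..t1} D"
    using assms(2) by (auto simp: is_solution_def Ck_on_def derivative_chain_def)
  note derivs = vector_derivatives_of_chain[OF assms(1) _ D(2), unfolded D(1)]
  show thesis
  proof (rule that[OF D])
    show "\<forall>t\<in>{0..t1}. D 2 t = A0 *v D 0 t + A1 *v D 1 t + B *v u t"
      using assms(2) derivs by (simp add: is_solution_def D(1))
    show "vector_derivative x (at 0 within {0..t1}) = D 1 0"
      using derivs(1)[of 0] assms(1) by simp
  qed
qed

lemma observable_if_kernel_trivial:
  fixes A0 A1 :: "real^'n^'n" and B :: "real^'r^'n" and C :: "real^'n^'p"
  assumes "t1 > 0"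
    and trivial: "\<And>v. \<forall>j<2 * CARD('n). C *v fst ((companion A0 A1 ^^ j) v) = 0 \<Longrightarrow> v = 0"
  shows "observable_on A0 A1 B C t1"
  unfolding observable_on_def
proof (intro allI impI, elim conjE)
  fix u x z
  assume "is_solution A0 A1 B t1 u x" "is_solution A0 A1 B t1 u z"
    and same_output: "\<forall>t\<in>{0..t1}. C *v x t = C *v z t"
  define m where "m = max 2 (2 * CARD('n) - 1)"
  obtain Dx where Dx: "Dx 0 = x" "derivative_chain m {0..t1} Dx"
    "\<forall>t\<in>{0..t1}. Dx 2 t = A0 *v Dx 0 t + A1 *v Dx 1 t + B *v u t"
    "vector_derivative x (at 0 within {0..t1}) = Dx 1 0"
    using is_solution_derivative_chain[OF assms(1) \<open>is_solution A0 A1 B t1 u x\<close>] m_def by metis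
  obtain Dz where Dz: "Dz 0 = z" "derivative_chain m {0..t1} Dz"
    "\<forall>t\<in>{0..t1}. Dz 2 t = A0 *v Dz 0 t + A1 *v Dz 1 t + B *v u t"
    "vector_derivative z (at 0 within {0..t1}) = Dz 1 0"
    using is_solution_derivative_chain[OF assms(1) \<open>is_solution A0 A1 B t1 u z\<close>] m_def by metis
  define D where "D k t = Dx k t - Dz k t" for k t
  have chain: "derivative_chain m {0..t1} D"
    using Dx(2) Dz(2) by (auto simp: derivative_chain_def D_def[abs_def] intro: has_vector_derivative_diff)
  have ode: "\<forall>t\<in>{0..t1}. D 2 t = A0 *v D 0 t + A1 *v D 1 t"
    using Dx(3) Dz(3) by (simp add: D_def matrix_vector_mult_diff_distrib)
  have "\<forall>t\<in>{0..t1}. C *v D 0 t = 0"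
    using same_output by (simp add: D_def Dx(1) Dz(1) matrix_vector_mult_diff_distrib)
  then have zero_output: "C *v D k 0 = 0" if "k \<le> m" for k
    using chain_output_vanishes[OF assms(1) chain matrix_vector_mul_bounded_linear[of C] _ that] assms(1) by simp
  define v where "v = (D 0 0, D 1 0)"
  have "fst ((companion A0 A1 ^^ k) v) = D k 0" if "k \<le> m" for k
  proof (cases k)
    case (Suc j)
    then have "fst ((companion A0 A1 ^^ k) v) = snd ((companion A0 A1 ^^ j) v)"
      by simp
    then show ?thesis
      using companion_pow_chain[OF assms(1) chain ode, of j 0] that Suc assms(1) by (simp add: v_def)
  qed (simp add: v_def)
  then have "v = 0"
    using trivial zero_output by (simp add: m_def)
  then show "x 0 = z 0 \<and> vector_derivative x (at 0 within {0..t1}) = vector_derivative z (at 0 within {0..t1})"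
    by (simp add: v_def D_def Dx(1,4) Dz(1,4) zero_prod_def)
qed

lemma is_solution_companion_exp:
  fixes A0 A1 :: "real^'n^'n" and B :: "real^'r^'n" and v :: "(real^'n) \<times> (real^'n)"
  assumes "t1 > 0"
  defines "x \<equiv> \<lambda>t. fst (exp_lin (companion A0 A1) t v)"
  shows "is_solution A0 A1 B t1 (\<lambda>_. 0) x"
    and "vector_derivative x (at 0 within {0..t1}) = snd v"
proof -
  let ?L = "companion A0 A1"
  define D where "D k t = fst (exp_lin ?L t ((?L^^k) v))" for k t
  have D0: "D 0 = x"
    by (simp add: D_def x_def fun_eq_iff)
  have "(D k has_vector_derivative D (Suc k) t) (at t)" for k t
    unfolding D_def funpow.simps(2) o_apply
    by (rule bounded_linear.has_vector_derivative[OF bounded_linear_fst has_vector_derivative_exp_lin[OF linear_companion]])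
  then have deriv: "(D k has_vector_derivative D (Suc k) t) (at t within S)" for k t S
    by (rule has_vector_derivative_at_within)
  then have chain: "derivative_chain m S D" for m S
    by (simp add: derivative_chain_def)
  have "continuous_on S (D k)" for k S
    using deriv[of k _ UNIV] by (auto intro: continuous_at_imp_continuous_on has_vector_derivative_continuous)
  then have "Ck_on m S x" for m S
    unfolding Ck_on_def using deriv D0 by blast
  moreover have "Ck_on m S (\<lambda>_. 0::real^'r)" for m S
    unfolding Ck_on_def by (rule exI[of _ "\<lambda>_ _. 0"]) auto
  moreover have D1: "D 1 t = snd (exp_lin ?L t v)" for t
    by (simp add: D_def exp_lin_commute[OF linear_companion, symmetric])
  moreover have "D 2 t = A0 *v x t + A1 *v snd (exp_lin ?L t v)" for t
    by (simp add: D_def x_def numeral_2_eq_2 exp_lin_commute[OF linear_companion, symmetric])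
  ultimately show "is_solution A0 A1 B t1 (\<lambda>_. 0) x"
    using vector_derivatives_of_chain[OF assms(1) _ chain order_refl, unfolded D0]
    by (simp add: is_solution_def)
  show "vector_derivative x (at 0 within {0..t1}) = snd v"
    using vector_derivatives_of_chain(1)[OF assms(1) _ chain order_refl, unfolded D0, of 0] D1[of 0] assms(1)
    by simp
qed

lemma kernel_trivial_if_observable:
  fixes A0 A1 :: "real^'n^'n" and B :: "real^'r^'n" and C :: "real^'n^'p"
  assumes "t1 > 0" and observable: "observable_on A0 A1 B C t1"
    and unobserved: "\<forall>j<2 * CARD('n). C *v fst ((companion A0 A1 ^^ j) v) = 0"
  shows "v = 0"
proof -
  let ?L = "companion A0 A1"
  let ?h = "\<lambda>w :: (real^'n) \<times> (real^'n). C *v fst w"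
  have h: "bounded_linear ?h"
    by (rule bounded_linear_compose[OF matrix_vector_mul_bounded_linear bounded_linear_fst])
  have "?h ((?L^^j) v) = 0" for j
    using vanishes_on_orbit_if_first_DIM[OF linear_companion bounded_linear.linear[OF h]] unobserved
    by (simp add: mult_2)
  then have "?h (exp_lin ?L t v) = 0" for t
    by (rule exp_lin_in_kernel[OF linear_companion h])
  moreover have "?h (exp_lin ?L t 0) = 0" for t
    by (rule exp_lin_in_kernel[OF linear_companion h])
      (simp add: linear_0[OF linear_funpow[OF linear_companion]])
  ultimately have "fst (exp_lin ?L 0 v) = fst (exp_lin ?L 0 0) \<and> snd v = snd (0 :: (real^'n) \<times> (real^'n))"
    using observable[unfolded observable_on_def, rule_format,
        of "\<lambda>_. 0" "\<lambda>t. fst (exp_lin ?L t v)" "\<lambda>t. fst (exp_lin ?L t 0)"]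
    by (simp add: is_solution_companion_exp[OF assms(1)])
  then show "v = 0"
    by (simp add: prod_eq_iff)
qed

definition halves :: "real^('n + 'n) \<Rightarrow> (real^'n) \<times> (real^'n)" where
  "halves x = (\<chi> j. x $ Inl j, \<chi> j. x $ Inr j)"

lemma halves_eq_0_iff: "halves x = 0 \<longleftrightarrow> x = 0"
  by (simp add: halves_def vec_eq_iff zero_prod_def split_sum_all)

lemma surj_halves: "surj halves"
proof (rule surjI)
  fix v :: "(real^'n) \<times> (real^'n)"
  show "halves (\<chi> c. case c of Inl j \<Rightarrow> fst v $ j | Inr j \<Rightarrow> snd v $ j) = v"
    by (simp add: halves_def vec_eq_iff prod_eq_iff)
qed

lemma hcat_mult_vec:
  fixes M N :: "real^'n^'p"
  shows "hcat M N *v x = M *v fst (halves x) + N *v snd (halves x)"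
  by (simp add: vec_eq_iff matrix_vector_mult_def hcat_def halves_def
      sum.Plus[OF finite[of "UNIV :: 'n set"] finite[of "UNIV :: 'n set"], unfolded UNIV_Plus_UNIV])

lemma fst_companion_pow_Suc_Suc:
  "fst ((companion A0 A1 ^^ Suc (Suc k)) v) = S_mat A0 A1 k *v fst v + P_mat A0 A1 k *v snd v"
proof (induction k arbitrary: v)
  case 0
  show ?case by (simp add: S_mat_def P_mat_def)
next
  case (Suc k)
  have "fst ((companion A0 A1 ^^ Suc (Suc (Suc k))) v) = fst ((companion A0 A1 ^^ Suc (Suc k)) (companion A0 A1 v))"
    by (simp only: funpow_Suc_right o_apply)
  also have "\<dots> = S_mat A0 A1 k *v snd v + P_mat A0 A1 k *v (A0 *v fst v + A1 *v snd v)"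
    by (simp only: Suc.IH) simp
  also have "\<dots> = S_mat A0 A1 (Suc k) *v fst v + P_mat A0 A1 (Suc k) *v snd v"
    by (simp add: S_mat_def P_mat_def matrix_vector_mult_add_rdistrib
        matrix_vector_mul_assoc[symmetric] matrix_vector_right_distrib algebra_simps)
  finally show ?case .
qed

lemma obs_block_mult_vec:
  "obs_block A0 A1 C j *v x = C *v fst ((companion A0 A1 ^^ j) (halves x))"
proof -
  consider "j = 0" | "j = 1" | k where "j = Suc (Suc k)"
    by (metis One_nat_def not0_implies_Suc)
  then show ?thesis
  proof cases
    case 3
    then show ?thesis
      by (simp add: obs_block_def hcat_mult_vec fst_companion_pow_Suc_Suc
          matrix_vector_mul_assoc[symmetric] matrix_vector_right_distrib del: funpow.simps)
  qed (simp_all add: obs_block_def hcat_mult_vec)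
qed

lemma obs_matrix_mult_eq_0_iff:
  fixes C :: "real^'n^'p"
  shows "obs_matrix A0 A1 C *v x = 0 \<longleftrightarrow> (\<forall>j<2 * CARD('n). obs_block A0 A1 C j *v x = 0)"
proof -
  let ?index = "to_nat_on (UNIV :: ('n + 'n) set)"
  have range: "range ?index = {..<2 * CARD('n)}"
    using bij_betw_imp_surj_on[OF to_nat_on_finite[of "UNIV :: ('n + 'n) set", simplified]]
    by (simp add: card_sum)
  have "obs_matrix A0 A1 C *v x = 0 \<longleftrightarrow> (\<forall>b. obs_block A0 A1 C (?index b) *v x = 0)"
    by (auto simp: vec_eq_iff matrix_vector_mult_def obs_matrix_def)
  also have "\<dots> \<longleftrightarrow> (\<forall>j\<in>range ?index. obs_block A0 A1 C j *v x = 0)"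
    by simp
  finally show ?thesis
    by (simp add: range Ball_def)
qed

lemma rank_obs_matrix_eq_iff:
  fixes A0 A1 :: "real^'n^'n" and C :: "real^'n^'p"
  shows "rank (obs_matrix A0 A1 C) = 2 * CARD('n) \<longleftrightarrow>
    (\<forall>v. (\<forall>j<2 * CARD('n). C *v fst ((companion A0 A1 ^^ j) v) = 0) \<longrightarrow> v = 0)"
proof -
  have ex_halves: "(\<exists>x. Q (halves x)) \<longleftrightarrow> (\<exists>v. Q v)" for Q
    using surj_halves by (metis surjD)
  have "rank (obs_matrix A0 A1 C) = 2 * CARD('n) \<longleftrightarrow> \<not> (\<exists>x. x \<noteq> 0 \<and> obs_matrix A0 A1 C *v x = 0)"
    using matrix_nonfull_linear_equations_eq[of "obs_matrix A0 A1 C"] by (simp add: card_sum mult_2)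
  also have "\<dots> \<longleftrightarrow> \<not> (\<exists>x. halves x \<noteq> 0 \<and> (\<forall>j<2 * CARD('n). C *v fst ((companion A0 A1 ^^ j) (halves x)) = 0))"
    by (simp add: obs_matrix_mult_eq_0_iff obs_block_mult_vec halves_eq_0_iff)
  also have "\<dots> \<longleftrightarrow> (\<forall>v. (\<forall>j<2 * CARD('n). C *v fst ((companion A0 A1 ^^ j) v) = 0) \<longrightarrow> v = 0)"
    using ex_halves[of "\<lambda>v. v \<noteq> 0 \<and> (\<forall>j<2 * CARD('n). C *v fst ((companion A0 A1 ^^ j) v) = 0)"]
    by blast
  finally show ?thesis .
qed

theorem theorem3p1:
  fixes A0 A1 :: "real^'n^'n" and B :: "real^'r^'n" and C :: "real^'n^'p" and t1 :: real
  assumes "t1 > 0"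
  shows "observable_on A0 A1 B C t1 \<longleftrightarrow> rank (obs_matrix A0 A1 C) = 2 * CARD('n)"
  unfolding rank_obs_matrix_eq_iff
  using observable_if_kernel_trivial[OF assms] kernel_trivial_if_observable[OF assms] by blast

end
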